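(* Let $\phi:\mathbb{R}_+\to\mathbb{R}_+$ be non-negative continuous, $d\nu=\phi(r)\,dr$, and let $I,J,K,L$ be non-negative functions on $\mathbb{R}_+$ such that $I(ab)\le bJ(a)+K(aL(b))$ for all $a,b\ge0$, $J$ is a lower isoperimetric function for $\nu$, $K$ is non-decreasing and concave, and $L$ is concave. Then for every elementary step function $f=b\mathbf{1}_{[r,s)}$ with $b\ge0$ and $0\le r<s$, $$I\Big(\int_{\mathbb{R}_+}f\,d\nu\Big)\le K\Big(\int_{\mathbb{R}_+}L(f)\,d\nu\Big)+V_\nu(f).$$
   Context: $\mathbb{R}_+=[0,\infty)$. For Borel $A\subset\mathbb{R}_+$, $\nu^+(A)=\liminf_{r\to0^+}\frac{\nu(A^r)-\nu(A)}{r}$ with $A^r=\{x\in\mathbb{R}_+:\operatorname{dist}(x,A)<r\}$; $J$ is a lower isoperimetric function for $\nu$ if $\nu^+(A)\ge J(\nu(A))$ for all Borel $A$. For a real function $f$ on $\mathbb{R}_+$ with bounded support, the weighted total variation is $V_\nu(f)=\sup\sum_{k=1}^{m}|f(\xi_k)-f(\xi_{k-1})|\,\phi(\xi_{k-1})$, the supremum over all $m\in\mathbb{N}$ and all finite increasing sequences $\xi_0<\xi_1<\dots<\xi_m$ of non-negative reals with $\operatorname{supp}f\subset[\xi_0,\xi_m]$. *)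

theory Defs
  imports "HOL-Analysis.Analysis" "HOL-Probability.Probability"
begin

definition nu :: "(real \<Rightarrow> real) \<Rightarrow> real measure" where
  "nu \<phi> = density lborel (\<lambda>x. indicator {0..} x * ennreal (\<phi> x))"

definition nbhd :: "real set \<Rightarrow> real \<Rightarrow> real set" where
  "nbhd A r = {x. 0 \<le> x \<and> (\<exists>y\<in>A. dist x y < r)}"

definition nu_plus :: "(real \<Rightarrow> real) \<Rightarrow> real set \<Rightarrow> ereal" where
  "nu_plus \<phi> A = Liminf (at_right 0)
     (\<lambda>r. (enn2ereal (emeasure (nu \<phi>) (nbhd A r)) - enn2ereal (emeasure (nu \<phi>) A)) / ereal r)"

definition lower_isoperimetric :: "(real \<Rightarrow> real) \<Rightarrow> (real \<Rightarrow> real) \<Rightarrow> bool" where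
  "lower_isoperimetric \<phi> J \<longleftrightarrow>
     (\<forall>A \<in> sets borel. A \<subseteq> {0..} \<longrightarrow> emeasure (nu \<phi>) A < \<infinity> \<longrightarrow>
        nu_plus \<phi> A \<ge> ereal (J (enn2real (emeasure (nu \<phi>) A))))"

definition supp :: "(real \<Rightarrow> real) \<Rightarrow> real set" where
  "supp f = closure {x. 0 \<le> x \<and> f x \<noteq> 0}"

definition V_nu :: "(real \<Rightarrow> real) \<Rightarrow> (real \<Rightarrow> real) \<Rightarrow> ereal" where
  "V_nu \<phi> f = Sup {ereal (\<Sum>k\<in>{1..m}. \<bar>f (\<xi> k) - f (\<xi> (k - 1))\<bar> * \<phi> (\<xi> (k - 1))) | (m::nat) (\<xi>::nat \<Rightarrow> real).
      1 \<le> m \<and> 0 \<le> \<xi> 0 \<and> strict_mono_on {0..m} \<xi> \<and> supp f \<subseteq> {\<xi> 0..\<xi> m}}"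

text \<open>Evaluation of a function K on R_+ at a value in [0,inf]; at inf we take the
  supremum of K (the monotone extension).\<close>
definition ext_at :: "(real \<Rightarrow> real) \<Rightarrow> ennreal \<Rightarrow> ereal" where
  "ext_at K x = (if x = \<infinity> then (SUP y\<in>{0..}. ereal (K y)) else ereal (K (enn2real x)))"

end

theory Submission
  imports Defs
begin

text \<open>
  Put \<open>A = [r,s)\<close> and \<open>a = \<nu>(A)\<close>, so that \<open>\<integral>f d\<nu> = ab\<close>. Continuity of \<open>\<phi>\<close> bounds the
  boundary measure: \<open>\<nu>\<^sup>+(A) \<le> \<phi>(r) + \<phi>(s)\<close>, the term \<open>\<phi>(r)\<close> being absent when \<open>r = 0\<close>.
  Partitions straddling the jumps of \<open>f\<close> at \<open>r\<close> and \<open>s\<close> give \<open>V\<^sub>\<nu>(f) \<ge> b (\<phi>(r) + \<phi>(s))\<close>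
  in the limit, hence \<open>b J(a) \<le> V\<^sub>\<nu>(f)\<close>. Since \<open>\<integral>L(f) d\<nu> \<ge> a L(b)\<close> and \<open>K\<close> is
  non-decreasing, the hypothesis \<open>I(ab) \<le> b J(a) + K(a L(b))\<close> yields the claim.
\<close>

lemma sets_nu [simp]: "sets (nu \<phi>) = sets borel"
  and space_nu [simp]: "space (nu \<phi>) = UNIV"
  unfolding nu_def by simp_all

lemma nu_density_measurable:
  fixes \<phi> :: "real \<Rightarrow> real"
  assumes "continuous_on {0..} \<phi>"
  shows "(\<lambda>x. indicator {0..} x * ennreal (\<phi> x)) \<in> borel_measurable borel"
proof -
  have eq: "(\<lambda>x. indicator {0..} x * ennreal (\<phi> x))
      = (\<lambda>x. indicator {0..} x * ennreal (\<phi> (max 0 x)))"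
    by (rule ext) (auto simp: indicator_def max_def)
  have "continuous_on UNIV (\<lambda>x::real. \<phi> (max 0 x))"
    by (rule continuous_on_compose2[OF assms]) (auto intro!: continuous_intros)
  hence "(\<lambda>x::real. \<phi> (max 0 x)) \<in> borel_measurable borel"
    by (rule borel_measurable_continuous_onI)
  thus ?thesis unfolding eq by measurable
qed

lemma emeasure_nu_le_bound:
  fixes \<phi> :: "real \<Rightarrow> real"
  assumes "continuous_on {0..} \<phi>"
    and S: "S \<in> sets borel" "S \<subseteq> {u..v}" and "u \<le> v"
    and M: "\<And>x. x \<in> S \<Longrightarrow> 0 \<le> x \<Longrightarrow> \<phi> x \<le> M" "0 \<le> M"
  shows "emeasure (nu \<phi>) S \<le> ennreal (M * (v - u))"
proof -
  have "emeasure (nu \<phi>) S = (\<integral>\<^sup>+x. indicator {0..} x * ennreal (\<phi> x) * indicator S x \<partial>lborel)"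
    unfolding nu_def using S nu_density_measurable[OF assms(1)]
    by (subst emeasure_density) auto
  also have "\<dots> \<le> (\<integral>\<^sup>+x. ennreal M * indicator {u..v} x \<partial>lborel)"
    using M S by (intro nn_integral_mono) (auto simp: indicator_def intro!: ennreal_leI)
  also have "\<dots> = ennreal (M * (v - u))"
    using M \<open>u \<le> v\<close> by (simp add: nn_integral_cmult_indicator ennreal_mult)
  finally show ?thesis .
qed

lemma emeasure_nu_bounded_finite:
  fixes \<phi> :: "real \<Rightarrow> real"
  assumes cont: "continuous_on {0..} \<phi>" and "S \<in> sets borel" "S \<subseteq> {u..v}"
  shows "emeasure (nu \<phi>) S < \<infinity>"
proof -
  have "continuous_on {max 0 u..max 0 v} \<phi>"
    by (rule continuous_on_subset[OF cont]) auto
  hence "bounded (\<phi> ` {max 0 u..max 0 v})"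
    by (intro compact_imp_bounded compact_continuous_image) auto
  then obtain M where M: "\<And>x. x \<in> {max 0 u..max 0 v} \<Longrightarrow> \<bar>\<phi> x\<bar> \<le> M"
    unfolding bounded_iff by fastforce
  show ?thesis
  proof (cases "u \<le> v")
    case True
    have "emeasure (nu \<phi>) S \<le> ennreal (max 0 M * (v - u))"
    proof (rule emeasure_nu_le_bound[OF cont assms(2,3) True])
      fix x assume "x \<in> S" "0 \<le> x"
      with assms(3) M[of x] show "\<phi> x \<le> max 0 M" by auto
    qed auto
    thus ?thesis using le_less_trans by fastforce
  next
    case False
    with assms(3) show ?thesis by simp
  qed
qed

lemma emeasure_nu_atLeastLessThan:
  fixes \<phi> :: "real \<Rightarrow> real"
  assumes "continuous_on {0..} \<phi>"
  shows "emeasure (nu \<phi>) {r..<s} = ennreal (measure (nu \<phi>) {r..<s})"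
proof -
  have "emeasure (nu \<phi>) {r..<s} < \<infinity>"
    by (rule emeasure_nu_bounded_finite[OF assms, of _ r s]) auto
  thus ?thesis by (simp add: emeasure_eq_ennreal_measure)
qed

lemma emeasure_nu_near_point_le:
  fixes \<phi> :: "real \<Rightarrow> real"
  assumes cont: "continuous_on {0..} \<phi>" and "0 \<le> a" "0 \<le> \<phi> a" "0 < e"
  shows "\<forall>\<^sub>F t in at_right 0. \<forall>u S. S \<in> sets borel \<longrightarrow> S \<subseteq> {u..u + t} \<longrightarrow> a \<in> {u..u + t}
           \<longrightarrow> emeasure (nu \<phi>) S \<le> ennreal ((\<phi> a + e) * t)"
proof -
  obtain d where "d > 0" and d: "\<And>x. 0 \<le> x \<Longrightarrow> \<bar>x - a\<bar> < d \<Longrightarrow> \<bar>\<phi> x - \<phi> a\<bar> < e"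
    using cont assms unfolding continuous_on_iff dist_real_def by (metis atLeast_iff)
  show ?thesis
    unfolding eventually_at_right_field
  proof (intro exI[of _ d] conjI allI impI \<open>d > 0\<close>)
    fix t u :: real and S assume "0 < t" "t < d" and S: "S \<in> sets borel" "S \<subseteq> {u..u + t}"
      and "a \<in> {u..u + t}"
    have "emeasure (nu \<phi>) S \<le> ennreal ((\<phi> a + e) * (u + t - u))"
    proof (rule emeasure_nu_le_bound[OF cont S])
      fix x assume "x \<in> S" "0 \<le> x"
      with S have "x \<in> {u..u + t}" by auto
      with \<open>a \<in> {u..u + t}\<close> \<open>t < d\<close> have "\<bar>x - a\<bar> < d" by auto
      with d[OF \<open>0 \<le> x\<close>] show "\<phi> x \<le> \<phi> a + e" by linarith
    qed (use assms \<open>0 < t\<close> in auto)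
    thus "emeasure (nu \<phi>) S \<le> ennreal ((\<phi> a + e) * t)" by simp
  qed
qed

lemma nbhd_atLeastLessThan:
  assumes "0 < t" "0 \<le> r" "r < s"
  shows "nbhd {r..<s} t = ({0..} \<inter> {r - t<..<r}) \<union> {r..<s} \<union> {s..<s + t}"
proof (intro set_eqI iffI)
  fix x assume "x \<in> nbhd {r..<s} t"
  then obtain y where "0 \<le> x" "r \<le> y" "y < s" "\<bar>x - y\<bar> < t"
    unfolding nbhd_def dist_real_def by auto
  thus "x \<in> ({0..} \<inter> {r - t<..<r}) \<union> {r..<s} \<union> {s..<s + t}" by auto
next
  fix x assume x: "x \<in> ({0..} \<inter> {r - t<..<r}) \<union> {r..<s} \<union> {s..<s + t}"
  show "x \<in> nbhd {r..<s} t"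
  proof (cases "x < s")
    case True
    with x assms show ?thesis unfolding nbhd_def
      by (auto simp: dist_real_def intro: bexI[of _ r] bexI[of _ x])
  next
    case False
    let ?y = "max r ((x - t + s) / 2)"
    have "?y \<in> {r..<s}" "dist x ?y < t" "0 \<le> x"
      using False x assms by (auto simp: dist_real_def max_def field_simps)
    thus ?thesis unfolding nbhd_def by blast
  qed
qed

text \<open>The weighted perimeter of \<open>[r,s)\<close> relative to \<open>\<real>\<^sub>+\<close>, where \<open>0\<close> is not a boundary point.\<close>

definition interval_perimeter :: "(real \<Rightarrow> real) \<Rightarrow> real \<Rightarrow> real \<Rightarrow> real" where
  "interval_perimeter \<phi> r s = (if 0 < r then \<phi> r else 0) + \<phi> s"

lemma emeasure_nu_nbhd_atLeastLessThan:
  assumes "0 < t" "0 \<le> r" "r < s"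
  shows "emeasure (nu \<phi>) (nbhd {r..<s} t)
    = emeasure (nu \<phi>) ({0..} \<inter> {r - t<..<r}) + emeasure (nu \<phi>) {r..<s} + emeasure (nu \<phi>) {s..<s + t}"
proof -
  have "emeasure (nu \<phi>) (nbhd {r..<s} t)
      = emeasure (nu \<phi>) ({0..} \<inter> {r - t<..<r} \<union> {r..<s}) + emeasure (nu \<phi>) {s..<s + t}"
    unfolding nbhd_atLeastLessThan[OF assms] using assms by (intro plus_emeasure[symmetric]) auto
  also have "emeasure (nu \<phi>) ({0..} \<inter> {r - t<..<r} \<union> {r..<s})
      = emeasure (nu \<phi>) ({0..} \<inter> {r - t<..<r}) + emeasure (nu \<phi>) {r..<s}"
    by (intro plus_emeasure[symmetric]) auto
  finally show ?thesis .
qed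

lemma nu_difference_quotient_atLeastLessThan_le:
  fixes \<phi> :: "real \<Rightarrow> real"
  assumes cont: "continuous_on {0..} \<phi>" and nonneg: "\<And>x. 0 \<le> x \<Longrightarrow> 0 \<le> \<phi> x"
    and rs: "0 \<le> r" "r < s" and "0 < e"
  shows "\<forall>\<^sub>F t in at_right 0.
    (enn2ereal (emeasure (nu \<phi>) (nbhd {r..<s} t)) - enn2ereal (emeasure (nu \<phi>) {r..<s})) / ereal t
      \<le> ereal (interval_perimeter \<phi> r s + e)"
proof -
  have "0 < e/2" "0 \<le> s" using \<open>0 < e\<close> rs by auto
  define mA where "mA = measure (nu \<phi>) {r..<s}"
  show ?thesis
    using emeasure_nu_near_point_le[OF cont rs(1) nonneg[OF rs(1)] \<open>0 < e/2\<close>]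
      emeasure_nu_near_point_le[OF cont \<open>0 \<le> s\<close> nonneg[OF \<open>0 \<le> s\<close>] \<open>0 < e/2\<close>]
      eventually_at_right_less[of 0]
  proof eventually_elim
    case (elim t)
    let ?L = "{0..} \<inter> {r - t<..<r}" and ?R = "{s..<s + t}"
    have "emeasure (nu \<phi>) ?L \<le> ennreal (((if 0 < r then \<phi> r else 0) + e/2) * t)"
    proof (cases "0 < r")
      case True
      with elim(1)[rule_format, of ?L "r - t"] elim(3) show ?thesis by fastforce
    next
      case False
      hence "?L = {}" using rs by auto
      thus ?thesis by simp
    qed
    then obtain mL where mL: "emeasure (nu \<phi>) ?L = ennreal mL" "0 \<le> mL"
      "mL \<le> ((if 0 < r then \<phi> r else 0) + e/2) * t"
      using nonneg[of r] \<open>0 < e\<close> elim(3)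
      by (cases "emeasure (nu \<phi>) ?L") (auto simp: ennreal_le_iff top_unique)
    have "emeasure (nu \<phi>) ?R \<le> ennreal ((\<phi> s + e/2) * t)"
      using elim(2)[rule_format, of ?R s] elim(3) by fastforce
    then obtain mR where mR: "emeasure (nu \<phi>) ?R = ennreal mR" "0 \<le> mR" "mR \<le> (\<phi> s + e/2) * t"
      using nonneg[of s] rs \<open>0 < e\<close> elim(3)
      by (cases "emeasure (nu \<phi>) ?R") (auto simp: ennreal_le_iff top_unique)
    have "emeasure (nu \<phi>) (nbhd {r..<s} t) = ennreal (mL + mA + mR)"
      unfolding emeasure_nu_nbhd_atLeastLessThan[OF elim(3) rs] mL(1) mR(1)
        emeasure_nu_atLeastLessThan[OF cont, of r s] mA_def
      using mL(2) mR(2) by (simp add: ennreal_plus)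
    hence "(enn2ereal (emeasure (nu \<phi>) (nbhd {r..<s} t)) - enn2ereal (emeasure (nu \<phi>) {r..<s})) / ereal t
        = ereal ((mL + mR) / t)"
      unfolding emeasure_nu_atLeastLessThan[OF cont, of r s] mA_def[symmetric]
      using mL(2) mR(2) elim(3) by (simp add: mA_def del: ennreal_plus)
    also have "(mL + mR) / t \<le> interval_perimeter \<phi> r s + e"
      using mL(3) mR(3) elim(3) by (simp add: pos_divide_le_eq interval_perimeter_def algebra_simps)
    finally show ?case by simp
  qed
qed

lemma nu_plus_atLeastLessThan_le:
  fixes \<phi> :: "real \<Rightarrow> real"
  assumes "continuous_on {0..} \<phi>" "\<And>x. 0 \<le> x \<Longrightarrow> 0 \<le> \<phi> x" "0 \<le> r" "r < s"
  shows "nu_plus \<phi> {r..<s} \<le> ereal (interval_perimeter \<phi> r s)"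
proof (rule ereal_le_epsilon2)
  fix e :: real assume "0 < e"
  have "nu_plus \<phi> {r..<s} \<le> Limsup (at_right 0) (\<lambda>t.
      (enn2ereal (emeasure (nu \<phi>) (nbhd {r..<s} t)) - enn2ereal (emeasure (nu \<phi>) {r..<s})) / ereal t)"
    unfolding nu_plus_def by (rule Liminf_le_Limsup) simp
  also have "\<dots> \<le> ereal (interval_perimeter \<phi> r s + e)"
    by (rule Limsup_bounded[OF nu_difference_quotient_atLeastLessThan_le[OF assms \<open>0 < e\<close>]])
  finally show "nu_plus \<phi> {r..<s} \<le> ereal (interval_perimeter \<phi> r s) + ereal e" by simp
qed

lemma partition_sum_le_V_nu:
  fixes m :: nat and \<xi> :: "nat \<Rightarrow> real" and f \<phi> :: "real \<Rightarrow> real"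
  assumes "1 \<le> m" "0 \<le> \<xi> 0" "strict_mono_on {0..m} \<xi>" "supp f \<subseteq> {\<xi> 0..\<xi> m}"
  shows "ereal (\<Sum>k\<in>{1..m}. \<bar>f (\<xi> k) - f (\<xi> (k - 1))\<bar> * \<phi> (\<xi> (k - 1))) \<le> V_nu \<phi> f"
  unfolding V_nu_def
  using assms by (intro Sup_upper) blast

lemma supp_step_function: "supp (\<lambda>x. b * indicator {r..<s} x) \<subseteq> {r..s}"
  unfolding supp_def by (rule closure_minimal) (auto simp: indicator_def)

lemma V_nu_step_ge_two_jumps:
  fixes b :: real
  assumes "0 \<le> b" "0 < \<epsilon>" "\<epsilon> < r" "\<epsilon> < s - r"
  shows "ereal (b * \<phi> (r - \<epsilon>) + b * \<phi> (s - \<epsilon>)) \<le> V_nu \<phi> (\<lambda>x. b * indicator {r..<s} x)"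
proof -
  define \<xi> where "\<xi> = (\<lambda>k::nat. if k = 0 then r - \<epsilon> else if k = 1 then r else if k = 2 then s - \<epsilon> else s)"
  have I: "{0..3::nat} = {0, 1, 2, 3}" "{1..3::nat} = {1, 2, 3}" by auto
  have "ereal (\<Sum>k\<in>{1..3}. \<bar>b * indicator {r..<s} (\<xi> k) - b * indicator {r..<s} (\<xi> (k - 1))\<bar>
      * \<phi> (\<xi> (k - 1))) \<le> V_nu \<phi> (\<lambda>x. b * indicator {r..<s} x)"
    using assms supp_step_function[of b r s]
    by (intro partition_sum_le_V_nu) (auto simp: I strict_mono_on_def \<xi>_def)
  moreover have "(\<Sum>k\<in>{1..3}. \<bar>b * indicator {r..<s} (\<xi> k) - b * indicator {r..<s} (\<xi> (k - 1))\<bar>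
      * \<phi> (\<xi> (k - 1))) = b * \<phi> (r - \<epsilon>) + b * \<phi> (s - \<epsilon>)"
    unfolding I using assms by (simp add: \<xi>_def indicator_def)
  ultimately show ?thesis by simp
qed

lemma V_nu_step_ge_one_jump:
  fixes b :: real
  assumes "0 \<le> b" "0 \<le> r" "0 < \<epsilon>" "\<epsilon> < s - r"
  shows "ereal (b * \<phi> (s - \<epsilon>)) \<le> V_nu \<phi> (\<lambda>x. b * indicator {r..<s} x)"
proof -
  define \<xi> where "\<xi> = (\<lambda>k::nat. if k = 0 then r else if k = 1 then s - \<epsilon> else s)"
  have I: "{0..2::nat} = {0, 1, 2}" "{1..2::nat} = {1, 2}" by auto
  have "ereal (\<Sum>k\<in>{1..2}. \<bar>b * indicator {r..<s} (\<xi> k) - b * indicator {r..<s} (\<xi> (k - 1))\<bar>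
      * \<phi> (\<xi> (k - 1))) \<le> V_nu \<phi> (\<lambda>x. b * indicator {r..<s} x)"
    using assms supp_step_function[of b r s]
    by (intro partition_sum_le_V_nu) (auto simp: I strict_mono_on_def \<xi>_def)
  moreover have "(\<Sum>k\<in>{1..2}. \<bar>b * indicator {r..<s} (\<xi> k) - b * indicator {r..<s} (\<xi> (k - 1))\<bar>
      * \<phi> (\<xi> (k - 1))) = b * \<phi> (s - \<epsilon>)"
    unfolding I using assms by (simp add: \<xi>_def indicator_def)
  ultimately show ?thesis by simp
qed

lemma tendsto_left_shift:
  fixes \<phi> :: "real \<Rightarrow> real"
  assumes "continuous_on {0..} \<phi>" "0 < a"
  shows "((\<lambda>\<epsilon>. \<phi> (a - \<epsilon>)) \<longlongrightarrow> \<phi> a) (at_right 0)"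
proof -
  have "isCont \<phi> a"
    using assms by (intro continuous_on_interior[of "{0..}"]) auto
  moreover have "((\<lambda>\<epsilon>. a - \<epsilon>) \<longlongrightarrow> a) (at_right (0::real))"
    by (auto intro!: tendsto_eq_intros)
  ultimately show ?thesis by (rule isCont_tendsto_compose)
qed

lemma V_nu_step_ge_perimeter:
  fixes \<phi> :: "real \<Rightarrow> real" and b :: real
  assumes cont: "continuous_on {0..} \<phi>" and "0 \<le> b" "0 \<le> r" "r < s"
  shows "ereal (b * interval_perimeter \<phi> r s) \<le> V_nu \<phi> (\<lambda>x. b * indicator {r..<s} x)"
proof (cases "0 < r")
  case True
  have lim: "((\<lambda>\<epsilon>. ereal (b * \<phi> (r - \<epsilon>) + b * \<phi> (s - \<epsilon>))) \<longlongrightarrow> ereal (b * (\<phi> r + \<phi> s))) (at_right 0)"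
    using tendsto_left_shift[OF cont True] tendsto_left_shift[OF cont, of s] assms
    by (auto intro!: tendsto_eq_intros simp: algebra_simps)
  have ev: "\<forall>\<^sub>F \<epsilon> in at_right 0. ereal (b * \<phi> (r - \<epsilon>) + b * \<phi> (s - \<epsilon>))
      \<le> V_nu \<phi> (\<lambda>x. b * indicator {r..<s} x)"
    unfolding eventually_at_right_field using True assms
    by (intro exI[of _ "min r (s - r)"]) (auto intro!: V_nu_step_ge_two_jumps)
  show ?thesis
    using tendsto_upperbound[OF lim ev] True by (simp add: interval_perimeter_def algebra_simps)
next
  case False
  have lim: "((\<lambda>\<epsilon>. ereal (b * \<phi> (s - \<epsilon>))) \<longlongrightarrow> ereal (b * \<phi> s)) (at_right 0)"
    using tendsto_left_shift[OF cont, of s] assms by (auto intro!: tendsto_eq_intros)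
  have ev: "\<forall>\<^sub>F \<epsilon> in at_right 0. ereal (b * \<phi> (s - \<epsilon>)) \<le> V_nu \<phi> (\<lambda>x. b * indicator {r..<s} x)"
    unfolding eventually_at_right_field using assms
    by (intro exI[of _ "s - r"]) (auto intro!: V_nu_step_ge_one_jump)
  show ?thesis
    using tendsto_upperbound[OF lim ev] False by (simp add: interval_perimeter_def)
qed

lemma integral_nu_step_function:
  fixes \<phi> :: "real \<Rightarrow> real"
  assumes "continuous_on {0..} \<phi>"
  shows "integral\<^sup>L (nu \<phi>) (\<lambda>x. b * indicator {r..<s} x) = b * measure (nu \<phi>) {r..<s}"
  using emeasure_nu_atLeastLessThan[OF assms, of r s]
  by (simp add: measure_def)

lemma lower_isoperimetric_atLeastLessThan:
  fixes \<phi> J :: "real \<Rightarrow> real"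
  assumes "lower_isoperimetric \<phi> J" "continuous_on {0..} \<phi>" "\<And>x. 0 \<le> x \<Longrightarrow> 0 \<le> \<phi> x"
    and "0 \<le> r" "r < s"
  shows "J (measure (nu \<phi>) {r..<s}) \<le> interval_perimeter \<phi> r s"
proof -
  have "{r..<s} \<in> sets borel" "{r..<s} \<subseteq> {0..}" "emeasure (nu \<phi>) {r..<s} < \<infinity>"
    using assms(4) emeasure_nu_atLeastLessThan[OF assms(2), of r s] by auto
  hence "ereal (J (measure (nu \<phi>) {r..<s})) \<le> nu_plus \<phi> {r..<s}"
    using assms(1) unfolding lower_isoperimetric_def measure_def by blast
  also have "\<dots> \<le> ereal (interval_perimeter \<phi> r s)"
    using nu_plus_atLeastLessThan_le[OF assms(2,3,4,5)] .
  finally show ?thesis by simp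
qed

lemma nn_integral_step_function_ge:
  fixes L :: "real \<Rightarrow> real" and b :: real
  assumes "A \<in> sets M" "0 \<le> L b"
  shows "ennreal (L b) * emeasure M A \<le> (\<integral>\<^sup>+ x. ennreal (L (b * indicator A x)) \<partial>M)"
proof -
  have "ennreal (L b) * emeasure M A = (\<integral>\<^sup>+ x. ennreal (L b) * indicator A x \<partial>M)"
    using assms by (simp add: nn_integral_cmult_indicator)
  also have "\<dots> \<le> (\<integral>\<^sup>+ x. ennreal (L (b * indicator A x)) \<partial>M)"
    by (intro nn_integral_mono) (simp add: indicator_def)
  finally show ?thesis .
qed

lemma ext_at_ge:
  assumes "mono_on {0..} K" "0 \<le> x" "ennreal x \<le> N"
  shows "ereal (K x) \<le> ext_at K N"
proof (cases "N = \<infinity>")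
  case True
  thus ?thesis unfolding ext_at_def using assms(2) by (auto intro!: SUP_upper)
next
  case False
  have "x = enn2real (ennreal x)" using assms(2) by simp
  also have "\<dots> \<le> enn2real N"
    using assms(3) False by (intro enn2real_mono) (auto simp: top.not_eq_extremum)
  finally have "x \<le> enn2real N" .
  hence "K x \<le> K (enn2real N)"
    using assms(2) by (intro mono_onD[OF assms(1)]) auto
  thus ?thesis unfolding ext_at_def using False by simp
qed

theorem lemma2p4:
  fixes \<phi> I J K L :: "real \<Rightarrow> real"
  assumes phi_cont: "continuous_on {0..} \<phi>"
    and phi_nonneg: "\<And>x. 0 \<le> x \<Longrightarrow> 0 \<le> \<phi> x"
    and I_nonneg: "\<And>x. 0 \<le> x \<Longrightarrow> 0 \<le> I x"
    and J_nonneg: "\<And>x. 0 \<le> x \<Longrightarrow> 0 \<le> J x"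
    and K_nonneg: "\<And>x. 0 \<le> x \<Longrightarrow> 0 \<le> K x"
    and L_nonneg: "\<And>x. 0 \<le> x \<Longrightarrow> 0 \<le> L x"
    and IJKL: "\<And>a b. 0 \<le> a \<Longrightarrow> 0 \<le> b \<Longrightarrow> I (a * b) \<le> b * J a + K (a * L b)"
    and J_iso: "lower_isoperimetric \<phi> J"
    and K_mono: "mono_on {0..} K"
    and K_concave: "concave_on {0..} K"
    and L_concave: "concave_on {0..} L"
    and b: "0 \<le> b" and rs: "0 \<le> r" "r < s"
    and f_def: "f = (\<lambda>x. b * indicator {r..<s} x)"
  shows "ereal (I (integral\<^sup>L (nu \<phi>) f))
           \<le> ext_at K (\<integral>\<^sup>+ x. ennreal (L (f x)) \<partial>nu \<phi>) + V_nu \<phi> f"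
proof -
  define a where "a = measure (nu \<phi>) {r..<s}"
  have "0 \<le> a" "0 \<le> L b" using L_nonneg b by (auto simp: a_def)
  have "ereal (b * J a) \<le> ereal (b * interval_perimeter \<phi> r s)"
    using lower_isoperimetric_atLeastLessThan[OF J_iso phi_cont phi_nonneg rs] b
    by (simp add: a_def mult_left_mono)
  also have "\<dots> \<le> V_nu \<phi> f"
    unfolding f_def by (rule V_nu_step_ge_perimeter[OF phi_cont b rs])
  finally have V: "ereal (b * J a) \<le> V_nu \<phi> f" .
  have "ennreal (a * L b) \<le> (\<integral>\<^sup>+ x. ennreal (L (f x)) \<partial>nu \<phi>)"
    using nn_integral_step_function_ge[of "{r..<s}" "nu \<phi>" L b] \<open>0 \<le> a\<close> \<open>0 \<le> L b\<close>
    unfolding f_def a_def emeasure_nu_atLeastLessThan[OF phi_cont]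
    by (simp add: ennreal_mult' mult.commute)
  hence K: "ereal (K (a * L b)) \<le> ext_at K (\<integral>\<^sup>+ x. ennreal (L (f x)) \<partial>nu \<phi>)"
    using \<open>0 \<le> a\<close> \<open>0 \<le> L b\<close> by (intro ext_at_ge[OF K_mono]) auto
  have "integral\<^sup>L (nu \<phi>) f = a * b"
    unfolding f_def a_def integral_nu_step_function[OF phi_cont] by simp
  hence "ereal (I (integral\<^sup>L (nu \<phi>) f)) \<le> ereal (K (a * L b)) + ereal (b * J a)"
    using IJKL[OF \<open>0 \<le> a\<close> b] by simp
  also have "\<dots> \<le> ext_at K (\<integral>\<^sup>+ x. ennreal (L (f x)) \<partial>nu \<phi>) + V_nu \<phi> f"
    using K V by (rule add_mono)
  finally show ?thesis .
qed

end
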